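(* If $\tau$ is a legal tree-like abstract path or a good tree-like abstract path, then $w(\tau)=1+G(\tau)+B_s(\tau)$.
   Context: $\mathbb F=\{0,1\}$, $\mathbb N=\{0,1,2,\dots\}$. Abstract vertex types: $o$ (interior), $u$ (unstable), $s$ (stable). An abstract edge is $\varepsilon=(\mu,(o_1,u_1,s_1),(o_2,u_2,s_2))\in\mathbb F\times\mathbb N^3\times\mathbb N^3$ with: if $\mu=0$ then $s_1=u_2=0$; if $\mu=1$ then $o_1=o_2=0$ (interior if $\mu=0$, boundary if $\mu=1$). Weight: $w(\varepsilon)=1$ if $\mu=0$, $2-s_1-u_2$ if $\mu=1$. An abstract path $\tau=(T,\tau,\sigma)$: a non-empty finite directed tree $T=(V,E)$ (nodes; arrows, or breaks), $\tau:V\to$ abstract edges, $\sigma:E\to\{o,u,s\}$, such that for each node $v$ and type $X$, $X_1(v)\ge|\{e:t(e)=v,\sigma(e)=X\}|$ and $X_2(v)\ge|\{e:s(e)=v,\sigma(e)=X\}|$, with $X_i(v)$ the entries of $\tau(v)$. Ends: $X_1(\tau)=\sum_vX_1(v)-|\sigma^{-1}(X)|$, $X_2(\tau)=\sum_vX_2(v)-|\sigma^{-1}(X)|$. Weight $w(\tau)=\sum_vw(\tau(v))$. $\tau$ is legal if $s_1(\tau)=u_2(\tau)=0$; tree-like if $o_2(v)+u_2(v)+s_2(v)=1$ for every node $v$; good if all its ends are interior or unstable, i.e. $s_1(\tau)=s_2(\tau)=0$. A break $e$ is good if $\sigma(e)\in\{o,u\}$; $G(\tau)=|\sigma^{-1}(o)|+|\sigma^{-1}(u)|$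 is the number of good breaks. $B_s(\tau)=|\{v\in V:\mu(v)=1,\ s_2(v)=1\}|$. *)

theory Defs
  imports Main "Graph_Theory.Digraph" "Graph_Theory.Digraph_Component"
begin

text \<open>Abstract vertex types: o (interior), u (unstable), s (stable).\<close>
datatype vtype = VO | VU | VS

text \<open>Abstract edge (mu, (o1,u1,s1), (o2,u2,s2)), mu in F = {0,1}.\<close>
type_synonym aedge = "nat \<times> (nat \<times> nat \<times> nat) \<times> (nat \<times> nat \<times> nat)"

definition mu :: "aedge \<Rightarrow> nat" where "mu e = fst e"

fun ent1 :: "vtype \<Rightarrow> aedge \<Rightarrow> nat" where
  "ent1 VO (m, (o1,u1,s1), (o2,u2,s2)) = o1"
| "ent1 VU (m, (o1,u1,s1), (o2,u2,s2)) = u1"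
| "ent1 VS (m, (o1,u1,s1), (o2,u2,s2)) = s1"

fun ent2 :: "vtype \<Rightarrow> aedge \<Rightarrow> nat" where
  "ent2 VO (m, (o1,u1,s1), (o2,u2,s2)) = o2"
| "ent2 VU (m, (o1,u1,s1), (o2,u2,s2)) = u2"
| "ent2 VS (m, (o1,u1,s1), (o2,u2,s2)) = s2"

definition is_aedge :: "aedge \<Rightarrow> bool" where
  "is_aedge e \<longleftrightarrow> mu e \<in> {0,1}
     \<and> (mu e = 0 \<longrightarrow> ent1 VS e = 0 \<and> ent2 VU e = 0)
     \<and> (mu e = 1 \<longrightarrow> ent1 VO e = 0 \<and> ent2 VO e = 0)"

definition aedge_weight :: "aedge \<Rightarrow> int" where
  "aedge_weight e = (if mu e = 0 then 1 else 2 - int (ent1 VS e) - int (ent2 VU e))"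

text \<open>A (finite, nonempty) directed tree: a finite digraph whose underlying
  undirected graph is a tree (connected, with |E| = |V| - 1).\<close>
definition directed_tree :: "('v,'e) pre_digraph \<Rightarrow> bool" where
  "directed_tree T \<longleftrightarrow> fin_digraph T \<and> connected T \<and> card (arcs T) + 1 = card (verts T)"

text \<open>An abstract path (T, tau, sigma); a break e goes from the source tail e
  to the target head e.\<close>
definition abstract_path ::
  "('v,'e) pre_digraph \<Rightarrow> ('v \<Rightarrow> aedge) \<Rightarrow> ('e \<Rightarrow> vtype) \<Rightarrow> bool" where
  "abstract_path T tau sigma \<longleftrightarrow> directed_tree T
     \<and> (\<forall>v\<in>verts T. is_aedge (tau v))
     \<and> (\<forall>v\<in>verts T. \<forall>X.
          ent1 X (tau v) \<ge> card {e\<in>arcs T. head T e = v \<and> sigma e = X}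
        \<and> ent2 X (tau v) \<ge> card {e\<in>arcs T. tail T e = v \<and> sigma e = X})"

definition breaks_of :: "('v,'e) pre_digraph \<Rightarrow> ('e \<Rightarrow> vtype) \<Rightarrow> vtype \<Rightarrow> 'e set" where
  "breaks_of T sigma X = {e\<in>arcs T. sigma e = X}"

definition ends1 :: "('v,'e) pre_digraph \<Rightarrow> ('v \<Rightarrow> aedge) \<Rightarrow> ('e \<Rightarrow> vtype) \<Rightarrow> vtype \<Rightarrow> int" where
  "ends1 T tau sigma X = (\<Sum>v\<in>verts T. int (ent1 X (tau v))) - int (card (breaks_of T sigma X))"

definition ends2 :: "('v,'e) pre_digraph \<Rightarrow> ('v \<Rightarrow> aedge) \<Rightarrow> ('e \<Rightarrow> vtype) \<Rightarrow> vtype \<Rightarrow> int" where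
  "ends2 T tau sigma X = (\<Sum>v\<in>verts T. int (ent2 X (tau v))) - int (card (breaks_of T sigma X))"

definition path_weight :: "('v,'e) pre_digraph \<Rightarrow> ('v \<Rightarrow> aedge) \<Rightarrow> int" where
  "path_weight T tau = (\<Sum>v\<in>verts T. aedge_weight (tau v))"

definition legal :: "('v,'e) pre_digraph \<Rightarrow> ('v \<Rightarrow> aedge) \<Rightarrow> ('e \<Rightarrow> vtype) \<Rightarrow> bool" where
  "legal T tau sigma \<longleftrightarrow> ends1 T tau sigma VS = 0 \<and> ends2 T tau sigma VU = 0"

definition tree_like :: "('v,'e) pre_digraph \<Rightarrow> ('v \<Rightarrow> aedge) \<Rightarrow> bool" where
  "tree_like T tau \<longleftrightarrow> (\<forall>v\<in>verts T. ent2 VO (tau v) + ent2 VU (tau v) + ent2 VS (tau v) = 1)"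

definition good :: "('v,'e) pre_digraph \<Rightarrow> ('v \<Rightarrow> aedge) \<Rightarrow> ('e \<Rightarrow> vtype) \<Rightarrow> bool" where
  "good T tau sigma \<longleftrightarrow> ends1 T tau sigma VS = 0 \<and> ends2 T tau sigma VS = 0"

definition good_breaks :: "('v,'e) pre_digraph \<Rightarrow> ('e \<Rightarrow> vtype) \<Rightarrow> nat" where
  "good_breaks T sigma = card (breaks_of T sigma VO) + card (breaks_of T sigma VU)"

definition B_s :: "('v,'e) pre_digraph \<Rightarrow> ('v \<Rightarrow> aedge) \<Rightarrow> nat" where
  "B_s T tau = card {v\<in>verts T. mu (tau v) = 1 \<and> ent2 VS (tau v) = 1}"

end

theory Submission
  imports Defs
begin

text \<open>In a tree-like path every node has exactly one outgoing end, so its weight is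
  1 - s1(v), plus 1 exactly when it is a boundary edge ending in a stable end.
  Summing over the nodes gives w = |V| + B_s - sum s1(v). Both legality and goodness
  say that every incoming stable end is consumed by a stable break, so sum s1(v) is the
  number of stable breaks; since |V| = |E| + 1 and the breaks split into good and
  stable ones, w = 1 + G + B_s.\<close>

lemma aedge_weight_single_exit:
  assumes "is_aedge e" and "ent2 VO e + ent2 VU e + ent2 VS e = 1"
  shows "aedge_weight e = 1 + of_bool (mu e = 1 \<and> ent2 VS e = 1) - int (ent1 VS e)"
proof -
  obtain m o1 u1 s1 o2 u2 s2 where e: "e = (m, (o1,u1,s1), (o2,u2,s2))"
    by (metis prod.exhaust)
  show ?thesis using assms unfolding e is_aedge_def aedge_weight_def mu_def by auto
qed

lemma card_arcs_by_break_type: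
  assumes "finite (arcs T)"
  shows "card (arcs T) = card (breaks_of T sigma VO) + card (breaks_of T sigma VU)
                          + card (breaks_of T sigma VS)"
proof -
  have arcs_split: "arcs T = breaks_of T sigma VO \<union> breaks_of T sigma VU \<union> breaks_of T sigma VS"
    unfolding breaks_of_def by (auto intro: vtype.exhaust)
  have "finite (breaks_of T sigma X)" for X
    using assms unfolding breaks_of_def by auto
  then show ?thesis
    unfolding arcs_split by (subst card_Un_disjoint; auto simp: breaks_of_def card_Un_disjoint)+
qed

lemma path_weight_tree_like:
  assumes "abstract_path T tau sigma" and "tree_like T tau"
  shows "path_weight T tau
           = int (card (verts T)) + int (B_s T tau) - (\<Sum>v\<in>verts T. int (ent1 VS (tau v)))"
proof -
  have edges: "\<forall>v\<in>verts T. is_aedge (tau v)" and "fin_digraph T"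
    using assms(1) unfolding abstract_path_def directed_tree_def by auto
  then have "finite (verts T)"
    by (simp add: fin_digraph_def fin_digraph_axioms_def)
  have "path_weight T tau
          = (\<Sum>v\<in>verts T. 1 + of_bool (mu (tau v) = 1 \<and> ent2 VS (tau v) = 1) - int (ent1 VS (tau v)))"
    unfolding path_weight_def
    using edges assms(2) by (intro sum.cong) (auto simp: tree_like_def aedge_weight_single_exit)
  also have "(\<Sum>v\<in>verts T. of_bool (mu (tau v) = 1 \<and> ent2 VS (tau v) = 1) :: int) = int (B_s T tau)"
    unfolding B_s_def using \<open>finite (verts T)\<close> by (simp add: of_bool_def sum.If_cases Int_def conj_commute)
  ultimately show ?thesis
    by (simp add: sum.distrib sum_subtractf)
qed

theorem corollary3p15:
  fixes T :: "('v,'e) pre_digraph" and tau :: "'v \<Rightarrow> aedge" and sigma :: "'e \<Rightarrow> vtype"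
  assumes "abstract_path T tau sigma"
    and "tree_like T tau"
    and "legal T tau sigma \<or> good T tau sigma"
  shows "path_weight T tau = 1 + int (good_breaks T sigma) + int (B_s T tau)"
proof -
  have "fin_digraph T" and tree_card: "card (arcs T) + 1 = card (verts T)"
    using assms(1) unfolding abstract_path_def directed_tree_def by auto
  then have "finite (arcs T)"
    by (simp add: fin_digraph_def fin_digraph_axioms_def)
  have "ends1 T tau sigma VS = 0"
    using assms(3) unfolding legal_def good_def by auto
  then have "(\<Sum>v\<in>verts T. int (ent1 VS (tau v))) = int (card (breaks_of T sigma VS))"
    unfolding ends1_def by simp
  then show ?thesis
    using path_weight_tree_like[OF assms(1,2)] tree_card
      card_arcs_by_break_type[OF \<open>finite (arcs T)\<close>, of sigma]
    unfolding good_breaks_def by linarith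
qed

end
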